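(* Let $h(z)=\sum_{k\ge1}h_kz^k$ be a power series with non-negative coefficients, not identically zero. Let $\mathbf{w}=(\omega_k)_{k\ge0}$ be the coefficients of $\phi(z)=1/(1-h(z))$ (as a formal power series), and let $p(z)=zh(z)=\sum_{k\ge2}p_kz^k$. Then $\mathbf{w}$ has type I, II or III (in the sense of weight sequences) if and only if $(p_k)_{k}$ has type I, II or III respectively (in the sense for $(p_k)$), and moreover $\tau=t_0$.
   Context: Types of a weight sequence $\mathbf{w}$ (with $\omega_0>0$ and $\omega_k>0$ for some $k\ge2$, which holds here): let $\rho_\phi$ be the radius of convergence of $\phi(z)=\sum_k\omega_kz^k$; if $\rho_\phi>0$ put $\psi(t)=t\phi'(t)/\phi(t)$ on $[0,\rho_\phi)$ and $\nu=\lim_{t\uparrow\rho_\phi}\psi(t)\in(0,\infty]$; if $\rho_\phi=0$ put $\nu=0$. If $\nu\ge1$, $\tau\in(0,\rho_\phi]$ is the unique number with $\psi(\tau)=1$, otherwise $\tau=\rho_\phi$. Type I: $\nu\ge1$; type II: $0<\nu<1$; type III: $\nu=0$. Types of $(p_k)$: let $\rho_p$ be the radius of convergence of $p(z)$, $\mu_t=p'(t)$ for $t\in[0,\rho_p)$ and $\mu_{\rho_p}=\lim_{t\uparrow\rho_p}\mu_t$. Type I: $\rho_p>0$ and $\mu_{\rho_p}\ge1$, with $t_0$ the unique $t$ satisfying $\mu_t=1$; type II: $\rho_p>0$ and $0<\mu_{\rho_p}<1$, with $t_0=\rho_p$; type III: $\rho_p=0$, with $t_0=0$. *)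

theory Defs
  imports "HOL-Analysis.Analysis" "HOL-Computational_Algebra.Formal_Power_Series"
begin

definition ps_fun :: "(nat \<Rightarrow> real) \<Rightarrow> real \<Rightarrow> real" where
  "ps_fun a t = (\<Sum>k. a k * t ^ k)"

definition upto_filter :: "ereal \<Rightarrow> real filter" where
  "upto_filter \<rho> = (if \<rho> = \<infinity> then at_top else at_left (real_of_ereal \<rho>))"

definition wt_psi :: "(nat \<Rightarrow> real) \<Rightarrow> real \<Rightarrow> real" where
  "wt_psi w t = t * deriv (ps_fun w) t / ps_fun w t"

definition wt_nu :: "(nat \<Rightarrow> real) \<Rightarrow> ereal" where
  "wt_nu w = (if conv_radius w = 0 then 0
              else Lim (upto_filter (conv_radius w)) (\<lambda>t. ereal (wt_psi w t)))"

definition wt_typeI :: "(nat \<Rightarrow> real) \<Rightarrow> bool" where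
  "wt_typeI w \<longleftrightarrow> wt_nu w \<ge> 1"

definition wt_typeII :: "(nat \<Rightarrow> real) \<Rightarrow> bool" where
  "wt_typeII w \<longleftrightarrow> 0 < wt_nu w \<and> wt_nu w < 1"

definition wt_typeIII :: "(nat \<Rightarrow> real) \<Rightarrow> bool" where
  "wt_typeIII w \<longleftrightarrow> wt_nu w = 0"

text \<open>tau: if nu >= 1, the unique number in (0, rho] with psi = 1, where the value of psi
  at rho is its limit nu; i.e. the unique solution in (0, rho) if it exists, otherwise rho.
  If nu < 1, tau = rho.\<close>
definition wt_tau :: "(nat \<Rightarrow> real) \<Rightarrow> ereal" where
  "wt_tau w = (if wt_nu w \<ge> 1 \<and> (\<exists>!t. 0 < t \<and> ereal t < conv_radius w \<and> wt_psi w t = 1)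
               then ereal (THE t. 0 < t \<and> ereal t < conv_radius w \<and> wt_psi w t = 1)
               else conv_radius w)"

definition p_mu :: "(nat \<Rightarrow> real) \<Rightarrow> real \<Rightarrow> real" where
  "p_mu p t = deriv (ps_fun p) t"

definition p_mu_rho :: "(nat \<Rightarrow> real) \<Rightarrow> ereal" where
  "p_mu_rho p = Lim (upto_filter (conv_radius p)) (\<lambda>t. ereal (p_mu p t))"

definition p_typeI :: "(nat \<Rightarrow> real) \<Rightarrow> bool" where
  "p_typeI p \<longleftrightarrow> conv_radius p > 0 \<and> p_mu_rho p \<ge> 1"

definition p_typeII :: "(nat \<Rightarrow> real) \<Rightarrow> bool" where
  "p_typeII p \<longleftrightarrow> conv_radius p > 0 \<and> 0 < p_mu_rho p \<and> p_mu_rho p < 1"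

definition p_typeIII :: "(nat \<Rightarrow> real) \<Rightarrow> bool" where
  "p_typeIII p \<longleftrightarrow> conv_radius p = 0"

text \<open>t0: in type I the unique t in [0, rho] with mu_t = 1 (mu at rho being the limit),
  i.e. the unique solution in [0, rho) if it exists, else rho; in types II and III, t0 = rho
  (which is 0 in type III).\<close>
definition p_t0 :: "(nat \<Rightarrow> real) \<Rightarrow> ereal" where
  "p_t0 p = (if p_typeI p \<and> (\<exists>!t. 0 \<le> t \<and> ereal t < conv_radius p \<and> p_mu p t = 1)
             then ereal (THE t. 0 \<le> t \<and> ereal t < conv_radius p \<and> p_mu p t = 1)
             else conv_radius p)"

end

(* Write H(t) = \<Sum> h_k t^k. Then \<phi> = 1/(1 - H), p(t) = t H(t), and with
   \<mu>(t) = p'(t) = H + t H' and \<psi>(t) = t \<phi>'/\<phi> = t H'/(1 - H) one has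
   \<mu> - 1 = (\<psi> - 1)(1 - H). Since all coefficients are non-negative, the radius of \<phi> is
   the first point where H reaches 1, or the radius of h if it never does; on that disc
   \<psi> = 1 exactly where \<mu> = 1, which identifies \<tau> with t\<^sub>0. Both \<psi> and \<mu> increase,
   so \<nu> and \<mu>(\<rho>) are suprema. If \<mu> ever reaches 1, both suprema are at least 1.
   Otherwise \<psi> \<le> \<mu> < 1 everywhere, and if \<psi> \<le> n < 1 then 1 - H stays bounded away
   from 0, which keeps \<mu> bounded away from 1. *)

theory Submission
  imports Defs
begin

section \<open>Real power series\<close>

lemma ereal_less_if_le: "s \<le> t \<Longrightarrow> ereal t < R \<Longrightarrow> ereal s < R"
  by (meson ereal_less_eq(3) le_less_trans)

lemma ps_fun_summable:
  "ereal \<bar>t\<bar> < conv_radius a \<Longrightarrow> summable (\<lambda>k. a k * (t::real) ^ k)"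
  using summable_in_conv_radius[of t a] by simp

lemma ps_fun_nonneg:
  assumes "\<And>k. a k \<ge> 0" "0 \<le> t" "ereal t < conv_radius a"
  shows "0 \<le> ps_fun a t"
  unfolding ps_fun_def using assms by (intro suminf_nonneg ps_fun_summable) auto

lemma ps_fun_term_le:
  assumes "\<And>k. a k \<ge> 0" "0 \<le> t" "ereal t < conv_radius a"
  shows "a k * t ^ k \<le> ps_fun a t"
proof -
  have "(\<Sum>i\<in>{k}. a i * t ^ i) \<le> ps_fun a t"
    unfolding ps_fun_def using assms by (intro sum_le_suminf ps_fun_summable) auto
  thus ?thesis by simp
qed

lemma ps_fun_mono:
  assumes "\<And>k. a k \<ge> 0" "0 \<le> s" "s \<le> t" "ereal t < conv_radius a"
  shows "ps_fun a s \<le> ps_fun a t"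
  unfolding ps_fun_def
proof (rule suminf_le)
  show "summable (\<lambda>k. a k * t ^ k)" "summable (\<lambda>k. a k * s ^ k)"
    using assms by (auto intro!: ps_fun_summable intro: ereal_less_if_le)
  show "a k * s ^ k \<le> a k * t ^ k" for k
    using assms by (intro mult_left_mono power_mono) auto
qed

lemma ps_fun_strict_mono:
  assumes "\<And>k. a k \<ge> 0" "a k > 0" "k \<ge> 1" "0 \<le> s" "s < t" "ereal t < conv_radius a"
  shows "ps_fun a s < ps_fun a t"
proof -
  have summable: "summable (\<lambda>k. a k * t ^ k)" "summable (\<lambda>k. a k * s ^ k)"
    using assms ereal_less_if_le[of s t] by (auto intro!: ps_fun_summable)
  have "s ^ k < t ^ k"
    using assms by (intro power_strict_mono) auto
  hence "0 < (\<Sum>i. a i * t ^ i - a i * s ^ i)"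
    using assms summable
    by (intro suminf_pos2[of _ k] summable_diff) (auto intro!: mult_left_mono power_mono)
  also have "\<dots> = ps_fun a t - ps_fun a s"
    unfolding ps_fun_def using summable by (rule suminf_diff[symmetric])
  finally show ?thesis by simp
qed

lemma has_real_derivative_ps_fun:
  assumes "ereal \<bar>t\<bar> < conv_radius a"
  shows "(ps_fun a has_real_derivative ps_fun (diffs a) t) (at t)"
proof -
  have "ps_fun a = (\<lambda>z. \<Sum>n. a n * z ^ n)"
    by (simp add: ps_fun_def fun_eq_iff)
  thus ?thesis
    using has_field_derivative_powser[of t a UNIV] assms by (simp add: ps_fun_def)
qed

lemma conv_radius_diffs_ge: "conv_radius a \<le> conv_radius (diffs (a :: nat \<Rightarrow> real))"
proof -
  have "fps_nth (fps_deriv (Abs_fps a)) = diffs a"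
    by (simp add: fun_eq_iff diffs_def fps_deriv_def)
  thus ?thesis
    using fps_conv_radius_deriv[of "Abs_fps a"] by (simp add: fps_conv_radius_def)
qed

lemma isCont_ps_fun: "ereal \<bar>t\<bar> < conv_radius a \<Longrightarrow> isCont (ps_fun a) t"
  by (rule DERIV_isCont[OF has_real_derivative_ps_fun])

lemma continuous_on_ps_fun:
  assumes "ereal t < conv_radius a"
  shows "continuous_on {0..t} (ps_fun a)"
  using assms by (intro continuous_at_imp_continuous_on ballI isCont_ps_fun)
    (auto intro: ereal_less_if_le)

lemma conv_radius_shift_right:
  fixes a :: "nat \<Rightarrow> real"
  shows "conv_radius (\<lambda>k. if k = 0 then 0 else a (k - 1)) = conv_radius a"
  using conv_radius_shift[of "\<lambda>k. if k = 0 then 0 else a (k - 1)" 1] by simp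

lemma ps_fun_shift_right:
  fixes a :: "nat \<Rightarrow> real"
  assumes "ereal \<bar>t\<bar> < conv_radius a"
  shows "ps_fun (\<lambda>k. if k = 0 then 0 else a (k - 1)) t = t * ps_fun a t"
proof -
  have "(\<lambda>k. a k * t ^ k) sums ps_fun a t"
    unfolding ps_fun_def using assms by (intro summable_sums ps_fun_summable)
  hence "(\<lambda>k. (if Suc k = 0 then 0 else a (Suc k - 1)) * t ^ Suc k) sums (t * ps_fun a t)"
    by (simp add: algebra_simps sums_mult)
  hence "(\<lambda>k. (if k = 0 then 0 else a (k - 1)) * t ^ k) sums (t * ps_fun a t)"
    by (subst (asm) sums_Suc_iff) simp
  thus ?thesis by (simp add: ps_fun_def sums_iff)
qed

lemma deriv_ps_fun_shift_right:
  fixes a :: "nat \<Rightarrow> real"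
  assumes "ereal \<bar>t\<bar> < conv_radius a"
  shows "deriv (ps_fun (\<lambda>k. if k = 0 then 0 else a (k - 1))) t
           = ps_fun a t + t * ps_fun (diffs a) t"
proof (rule DERIV_imp_deriv)
  have "((\<lambda>z. z * ps_fun a z) has_real_derivative ps_fun a t + t * ps_fun (diffs a) t) (at t)"
    using has_real_derivative_ps_fun[OF assms] by (auto intro!: derivative_eq_intros)
  thus "(ps_fun (\<lambda>k. if k = 0 then 0 else a (k - 1)) has_real_derivative
           ps_fun a t + t * ps_fun (diffs a) t) (at t)"
  proof (rule has_field_derivative_transform_within_open)
    show "open {z :: real. ereal \<bar>z\<bar> < conv_radius a}"
      using open_eball[of "0 :: real" "conv_radius a"] by (simp add: eball_def dist_real_def)
  qed (use assms ps_fun_shift_right[of _ a] in auto)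
qed

lemma Lim_upto_filter_mono:
  fixes f :: "real \<Rightarrow> real"
  assumes "R > 0" and mono: "\<And>s t. 0 < s \<Longrightarrow> s \<le> t \<Longrightarrow> ereal t < R \<Longrightarrow> f s \<le> f t"
  shows "Lim (upto_filter R) (\<lambda>t. ereal (f t)) = (SUP t\<in>{t. 0 < t \<and> ereal t < R}. ereal (f t))"
    (is "_ = ?S")
proof (rule tendsto_Lim)
  have eventually_above: "eventually (\<lambda>t. s \<le> t \<and> ereal t < R) (upto_filter R)"
    if "ereal s < R" for s
  proof (cases R)
    case (real r)
    thus ?thesis
      using that by (auto simp: upto_filter_def eventually_at_left intro!: exI[of _ s])
  qed (use that in \<open>auto simp: upto_filter_def eventually_at_top_linorder\<close>)
  show "\<not> trivial_limit (upto_filter R)"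
    using \<open>R > 0\<close> by (cases R) (auto simp: upto_filter_def trivial_limit_at_left_real)
  show "((\<lambda>t. ereal (f t)) \<longlongrightarrow> ?S) (upto_filter R)"
  proof (rule increasing_tendsto)
    obtain s where "0 < s" "ereal s < R"
      using ereal_dense2[OF \<open>R > 0\<close>] by auto
    with eventually_above[of s] show "eventually (\<lambda>t. ereal (f t) \<le> ?S) (upto_filter R)"
      by (auto elim!: eventually_mono intro!: SUP_upper)
  next
    fix x assume "x < ?S"
    then obtain s where s: "0 < s" "ereal s < R" "x < ereal (f s)"
      by (auto simp: less_SUP_iff)
    show "eventually (\<lambda>t. x < ereal (f t)) (upto_filter R)"
      using eventually_above[OF s(2)]
    proof eventually_elim
      case (elim t)
      hence "f s \<le> f t" using mono[of s t] s by auto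
      thus ?case using s by (simp add: less_le_trans)
    qed
  qed
qed

lemma sum_convolution_le_product:
  fixes a b :: "nat \<Rightarrow> real"
  assumes "\<And>k. a k \<ge> 0" "\<And>k. b k \<ge> 0"
  shows "(\<Sum>k\<le>N. \<Sum>j\<le>k. a j * b (k - j)) \<le> (\<Sum>j\<le>N. a j) * (\<Sum>i\<le>N. b i)"
proof -
  have "(\<Sum>k\<le>N. \<Sum>j\<le>k. a j * b (k - j)) = (\<Sum>(i, j)\<in>{(i, j). i + j \<le> N}. a i * b j)"
    by (rule sum.triangle_reindex_eq[symmetric])
  also have "\<dots> \<le> (\<Sum>(i, j)\<in>{..N} \<times> {..N}. a i * b j)"
    by (rule sum_mono2) (auto intro!: mult_nonneg_nonneg assms)
  also have "\<dots> = (\<Sum>j\<le>N. a j) * (\<Sum>i\<le>N. b i)"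
    by (simp add: sum_product sum.cartesian_product)
  finally show ?thesis .
qed

section \<open>The reciprocal series \<open>1 / (1 - h)\<close>\<close>

locale nonneg_power_series =
  fixes h :: "nat \<Rightarrow> real"
  assumes h_0: "h 0 = 0" and h_nonneg: "\<And>k. h k \<ge> 0"
begin

abbreviation H :: "real \<Rightarrow> real" where "H \<equiv> ps_fun h"

definition w :: "nat \<Rightarrow> real" where "w = fps_nth (inverse (1 - Abs_fps h))"

lemma inverse_mult_self: "inverse (1 - Abs_fps h) * (1 - Abs_fps h) = 1"
  by (rule inverse_mult_eq_1) (simp add: h_0)

lemma w_rec: "w k = (if k = 0 then 1 else 0) + (\<Sum>i<k. w i * h (k - i))"
proof -
  define W where "W = inverse (1 - Abs_fps h)"
  have "W = 1 + W * Abs_fps h"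
    using inverse_mult_self by (simp add: W_def algebra_simps)
  hence "fps_nth W k = fps_nth (1 + W * Abs_fps h) k" by simp
  also have "\<dots> = (if k = 0 then 1 else 0) + (\<Sum>i=0..k. fps_nth W i * h (k - i))"
    by (simp add: fps_mult_nth)
  also have "(\<Sum>i=0..k. fps_nth W i * h (k - i)) = (\<Sum>i<k. fps_nth W i * h (k - i))"
    using h_0 by (simp add: atLeast0AtMost lessThan_Suc_atMost[symmetric])
  finally show ?thesis by (simp add: w_def W_def)
qed

lemma w_0: "w 0 = 1"
  using w_rec[of 0] by simp

lemma w_nonneg: "w k \<ge> 0"
proof (induction k rule: less_induct)
  case (less k)
  show ?case
    by (subst w_rec) (auto intro!: sum_nonneg mult_nonneg_nonneg less h_nonneg)
qed

lemma h_le_w: "h k \<le> w k"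
proof (cases "k = 0")
  case False
  have "h k = w 0 * h (k - 0)" using w_0 by simp
  also have "\<dots> \<le> (\<Sum>i<k. w i * h (k - i))"
    using False by (intro member_le_sum mult_nonneg_nonneg w_nonneg h_nonneg) auto
  also have "\<dots> = w k" using w_rec[of k] False by simp
  finally show ?thesis .
qed (simp add: h_0 w_0)

lemma conv_radius_w_le: "conv_radius w \<le> conv_radius h"
proof (rule conv_radius_geI_ex')
  fix r :: real assume r: "0 < r" "ereal r < conv_radius w"
  have "summable (\<lambda>k. w k * r ^ k)"
    using r by (intro ps_fun_summable) simp
  thus "summable (\<lambda>n. h n * of_real r ^ n)"
  proof (rule summable_comparison_test'[where N = 0])
    fix n
    show "norm (h n * of_real r ^ n) \<le> w n * r ^ n"
      using r h_nonneg[of n] h_le_w[of n] by (simp add: mult_right_mono)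
  qed
qed

lemma ps_fun_w_mult:
  assumes "ereal \<bar>z\<bar> < conv_radius w"
  shows "ps_fun w z * (1 - H z) = 1"
proof -
  define W where "W = inverse (1 - Abs_fps h)"
  have "norm z < fps_conv_radius (Abs_fps h)"
    using assms conv_radius_w_le by (simp add: fps_conv_radius_def)
  moreover have "norm z < fps_conv_radius W"
    using assms by (simp add: fps_conv_radius_def W_def w_def)
  ultimately have "eval_fps (W * (1 - Abs_fps h)) z = eval_fps W z * (1 - eval_fps (Abs_fps h) z)"
    using fps_conv_radius_diff[of 1 "Abs_fps h"]
    by (subst eval_fps_mult) (auto simp: eval_fps_diff intro: order_less_le_trans)
  moreover have "eval_fps (W * (1 - Abs_fps h)) z = 1"
    using inverse_mult_self by (simp add: W_def)
  ultimately show ?thesis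
    by (simp add: eval_fps_def ps_fun_def W_def w_def)
qed

lemma H_lt_1_if_in_radius_w:
  assumes "0 \<le> t" "ereal t < conv_radius w"
  shows "H t < 1"
proof -
  have "0 \<le> ps_fun w t"
    using assms by (intro ps_fun_nonneg w_nonneg)
  with ps_fun_w_mult[of t] assms show ?thesis
    by (smt (verit) mult_nonneg_nonpos)
qed

text \<open>By the recursion for \<open>w\<close>, each partial sum \<open>S\<close> of \<open>w k t^k\<close> satisfies
  \<open>S \<le> 1 + S H(t)\<close>, so \<open>S \<le> 1 / (1 - H t)\<close>.\<close>
lemma summable_w_if_H_lt_1:
  assumes "0 \<le> t" "ereal t < conv_radius h" "H t < 1"
  shows "summable (\<lambda>k. w k * t ^ k)"
proof (rule bounded_imp_summable)
  define a where "a = (\<lambda>k. w k * t ^ k)"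
  define b where "b = (\<lambda>k. h k * t ^ k)"
  have ab_nonneg: "a k \<ge> 0" "b k \<ge> 0" for k
    using assms by (auto simp: a_def b_def intro!: mult_nonneg_nonneg w_nonneg h_nonneg)
  thus "0 \<le> w k * t ^ k" for k by (simp add: a_def)
  fix N
  have a_rec: "a k = (if k = 0 then 1 else 0) + (\<Sum>j\<le>k. a j * b (k - j))" for k
  proof -
    have "a k = (if k = 0 then 1 else 0) + (\<Sum>j<k. w j * h (k - j)) * t ^ k"
      unfolding a_def by (subst w_rec) (simp add: algebra_simps)
    also have "(\<Sum>j<k. w j * h (k - j)) * t ^ k = (\<Sum>j\<le>k. w j * h (k - j) * t ^ k)"
      using h_0 by (simp add: sum_distrib_right lessThan_Suc_atMost[symmetric])
    also have "\<dots> = (\<Sum>j\<le>k. a j * b (k - j))"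
      by (intro sum.cong refl) (simp add: a_def b_def power_add[symmetric])
    finally show ?thesis .
  qed
  have "(\<Sum>k\<le>N. a k) = 1 + (\<Sum>k\<le>N. \<Sum>j\<le>k. a j * b (k - j))"
    by (subst a_rec) (simp add: sum.distrib)
  also have "\<dots> \<le> 1 + (\<Sum>j\<le>N. a j) * (\<Sum>i\<le>N. b i)"
    using ab_nonneg by (simp add: sum_convolution_le_product)
  also have "\<dots> \<le> 1 + (\<Sum>j\<le>N. a j) * H t"
    unfolding ps_fun_def b_def using assms ab_nonneg
    by (intro add_left_mono mult_left_mono sum_nonneg sum_le_suminf ps_fun_summable)
       (auto intro!: mult_nonneg_nonneg h_nonneg)
  finally show "(\<Sum>k\<le>N. w k * t ^ k) \<le> 1 / (1 - H t)"
    using assms(3) by (simp add: a_def field_simps)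
qed

lemma in_radius_w_iff:
  assumes "0 \<le> t"
  shows "ereal t < conv_radius w \<longleftrightarrow> ereal t < conv_radius h \<and> H t < 1"
proof
  assume "ereal t < conv_radius w"
  thus "ereal t < conv_radius h \<and> H t < 1"
    using assms conv_radius_w_le H_lt_1_if_in_radius_w by (auto intro: order.strict_trans2)
next
  assume t: "ereal t < conv_radius h \<and> H t < 1"
  then obtain b where b: "t < b" "ereal b < conv_radius h"
    using ereal_dense2 by (metis ereal_less(2) less_ereal.simps(1))
  have "isCont H t"
    using assms t by (intro isCont_ps_fun) auto
  hence "(H \<longlongrightarrow> H t) (at_right t)"
    by (simp add: isCont_def filterlim_at_split)
  hence "eventually (\<lambda>x. H x < 1 \<and> x \<in> {t<..<b}) (at_right t)"
    using t b by (intro eventually_conj order_tendstoD(2) eventually_at_right_real) auto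
  then obtain x where x: "H x < 1" "t < x" "x < b"
    using eventually_happens'[OF trivial_limit_at_right_real] by auto
  have "summable (\<lambda>k. w k * x ^ k)"
    using x b assms ereal_less_if_le[of x b] by (intro summable_w_if_H_lt_1) auto
  hence "ereal (norm x) \<le> conv_radius w"
    by (rule conv_radius_geI)
  thus "ereal t < conv_radius w"
    using x assms less_le_trans[of "ereal t" "ereal x"] by auto
qed

lemma conv_radius_w_eq:
  assumes "\<And>t. 0 \<le> t \<Longrightarrow> ereal t < conv_radius h \<Longrightarrow> H t < 1"
  shows "conv_radius w = conv_radius h"
proof (rule antisym[OF conv_radius_w_le], rule ccontr)
  assume "\<not> conv_radius h \<le> conv_radius w"
  then obtain r where r: "conv_radius w < ereal r" "ereal r < conv_radius h"
    using ereal_dense2 by (metis not_le)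
  moreover have "0 \<le> r"
    using r conv_radius_nonneg[of w] by (metis ereal_less_eq(5) order.trans order_less_imp_le)
  ultimately show False
    using in_radius_w_iff[of r] assms[of r] by auto
qed

end

section \<open>Comparing the types of \<open>w\<close> and \<open>p\<close>\<close>

locale nontrivial_nonneg_power_series = nonneg_power_series +
  assumes h_nonzero: "\<exists>k. h k \<noteq> 0"
begin

abbreviation H' :: "real \<Rightarrow> real" where "H' \<equiv> ps_fun (diffs h)"

definition p :: "nat \<Rightarrow> real" where "p = (\<lambda>k. if k = 0 then 0 else h (k - 1))"

text \<open>\<open>mu\<close> is the derivative of \<open>t H(t)\<close>, and \<open>psi\<close> the logarithmic derivative
  \<open>t \<phi>'(t) / \<phi>(t)\<close> of \<open>\<phi> = 1 / (1 - H)\<close>.\<close>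
definition mu :: "real \<Rightarrow> real" where "mu t = H t + t * H' t"

definition psi :: "real \<Rightarrow> real" where "psi t = t * H' t / (1 - H t)"

lemma h_pos: obtains k where "k \<ge> 1" "h k > 0"
proof -
  obtain k where "h k \<noteq> 0"
    using h_nonzero by blast
  moreover from this have "k \<ge> 1"
    using h_0 by (cases k) auto
  ultimately show ?thesis
    using that[of k] h_nonneg[of k] by auto
qed

lemma in_radius_diffs: "ereal t < conv_radius h \<Longrightarrow> ereal t < conv_radius (diffs h)"
  by (erule order.strict_trans2[OF _ conv_radius_diffs_ge])

lemma diffs_h_nonneg: "diffs h k \<ge> 0"
  by (simp add: diffs_def h_nonneg)

lemma H_0: "H 0 = 0"
  by (simp add: ps_fun_def h_0 zero_power)

lemma H_nonneg: "0 \<le> t \<Longrightarrow> ereal t < conv_radius h \<Longrightarrow> 0 \<le> H t"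
  by (intro ps_fun_nonneg h_nonneg)

lemma H'_nonneg: "0 \<le> t \<Longrightarrow> ereal t < conv_radius h \<Longrightarrow> 0 \<le> H' t"
  by (intro ps_fun_nonneg diffs_h_nonneg in_radius_diffs)

lemma H'_mono: "0 \<le> s \<Longrightarrow> s \<le> t \<Longrightarrow> ereal t < conv_radius h \<Longrightarrow> H' s \<le> H' t"
  by (intro ps_fun_mono diffs_h_nonneg in_radius_diffs)

lemma H_strict_mono: "0 \<le> s \<Longrightarrow> s < t \<Longrightarrow> ereal t < conv_radius h \<Longrightarrow> H s < H t"
  by (rule h_pos) (rule ps_fun_strict_mono[OF h_nonneg])

lemma H_mono: "0 \<le> s \<Longrightarrow> s \<le> t \<Longrightarrow> ereal t < conv_radius h \<Longrightarrow> H s \<le> H t"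
  by (intro ps_fun_mono h_nonneg)

lemma H'_pos:
  assumes "0 < t" "ereal t < conv_radius h"
  shows "0 < H' t"
proof -
  obtain k where k: "k \<ge> 1" "h k > 0"
    by (rule h_pos)
  have "diffs h (k - 1) = of_nat k * h k"
    using k by (simp add: diffs_def)
  hence "0 < diffs h (k - 1) * t ^ (k - 1)"
    using k assms by simp
  also have "\<dots> \<le> H' t"
    using assms by (intro ps_fun_term_le diffs_h_nonneg in_radius_diffs) auto
  finally show ?thesis .
qed

lemma t_H'_mono:
  "0 \<le> s \<Longrightarrow> s \<le> t \<Longrightarrow> ereal t < conv_radius h \<Longrightarrow> s * H' s \<le> t * H' t"
  using ereal_less_if_le[of s t] by (intro mult_mono H'_mono H'_nonneg) auto

lemma mu_0: "mu 0 = 0"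
  by (simp add: mu_def H_0)

lemma H_le_mu: "0 \<le> t \<Longrightarrow> ereal t < conv_radius h \<Longrightarrow> H t \<le> mu t"
  by (simp add: mu_def H'_nonneg)

lemma mu_strict_mono: "0 \<le> s \<Longrightarrow> s < t \<Longrightarrow> ereal t < conv_radius h \<Longrightarrow> mu s < mu t"
  unfolding mu_def using H_strict_mono t_H'_mono by (smt (verit))

lemma mu_mono: "0 \<le> s \<Longrightarrow> s \<le> t \<Longrightarrow> ereal t < conv_radius h \<Longrightarrow> mu s \<le> mu t"
  using mu_strict_mono[of s t] by (cases "s = t") auto

lemma continuous_on_mu: "ereal t < conv_radius h \<Longrightarrow> continuous_on {0..t} mu"
  unfolding mu_def
  by (intro continuous_intros continuous_on_ps_fun in_radius_diffs)

lemma psi_mono: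
  assumes "0 < s" "s \<le> t" "ereal t < conv_radius w"
  shows "psi s \<le> psi t"
proof -
  have t: "ereal t < conv_radius h" "H t < 1"
    using assms in_radius_w_iff[of t] by auto
  show ?thesis
    unfolding psi_def using assms t H_mono[of s t]
    by (intro frac_le t_H'_mono mult_nonneg_nonneg H'_nonneg ereal_less_if_le[of s t]) auto
qed

lemma psi_eq_1_iff_mu_eq_1: "H t < 1 \<Longrightarrow> psi t = 1 \<longleftrightarrow> mu t = 1"
  by (auto simp: psi_def mu_def field_simps)

text \<open>\<open>mu t - psi t = H t * (1 - mu t) / (1 - H t)\<close>.\<close>
lemma psi_le_mu:
  assumes "0 < t" "ereal t < conv_radius h" "mu t \<le> 1"
  shows "psi t \<le> mu t"
proof -
  have "H t < 1"
    using assms mult_pos_pos[OF assms(1) H'_pos[OF assms(1,2)]] by (simp add: mu_def)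
  moreover have "0 \<le> H t * (1 - mu t)"
    using assms H_nonneg[of t] by simp
  ultimately show ?thesis
    by (simp add: psi_def mu_def field_simps)
qed

lemma conv_radius_p: "conv_radius p = conv_radius h"
  by (simp add: p_def conv_radius_shift_right)

lemma p_mu_p_eq_mu: "0 \<le> t \<Longrightarrow> ereal t < conv_radius h \<Longrightarrow> p_mu p t = mu t"
  by (simp add: p_mu_def p_def mu_def deriv_ps_fun_shift_right)

lemma wt_psi_w_eq_psi:
  assumes "0 < t" "ereal t < conv_radius w"
  shows "wt_psi w t = psi t"
proof -
  let ?S = "{z :: real. ereal \<bar>z\<bar> < conv_radius w}"
  have t: "ereal \<bar>t\<bar> < conv_radius h" "H t < 1"
    using assms in_radius_w_iff[of t] by auto
  have w_eq: "ps_fun w z = 1 / (1 - H z)" if "z \<in> ?S" for z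
    using ps_fun_w_mult[of z] that by (auto simp: eq_divide_eq)
  have "((\<lambda>z. 1 / (1 - H z)) has_real_derivative H' t / (1 - H t)\<^sup>2) (at t)"
    using has_real_derivative_ps_fun[OF t(1)] t(2)
    by (auto intro!: derivative_eq_intros simp: power2_eq_square field_simps)
  hence "(ps_fun w has_real_derivative H' t / (1 - H t)\<^sup>2) (at t)"
  proof (rule has_field_derivative_transform_within_open)
    show "open ?S"
      using open_eball[of "0 :: real" "conv_radius w"] by (simp add: eball_def dist_real_def)
  qed (use assms w_eq in auto)
  hence D: "deriv (ps_fun w) t = H' t / (1 - H t)\<^sup>2"
    by (rule DERIV_imp_deriv)
  have W: "ps_fun w t = 1 / (1 - H t)"
    using w_eq assms by simp
  have "t * (y / d\<^sup>2) / (1 / d) = t * y / d" if "d \<noteq> 0" for d y :: real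
    using that by (simp add: power2_eq_square field_simps)
  thus ?thesis
    unfolding wt_psi_def psi_def D W using t(2) by simp
qed

lemma conv_radius_w_pos: "conv_radius h > 0 \<Longrightarrow> conv_radius w > 0"
  using in_radius_w_iff[of 0] H_0 by (simp add: zero_ereal_def)

lemma wt_nu_eq_SUP:
  assumes "conv_radius h > 0"
  shows "wt_nu w = (SUP t\<in>{t. 0 < t \<and> ereal t < conv_radius w}. ereal (psi t))"
proof -
  have "wt_nu w = Lim (upto_filter (conv_radius w)) (\<lambda>t. ereal (wt_psi w t))"
    using conv_radius_w_pos[OF assms] by (auto simp: wt_nu_def)
  also have "\<dots> = (SUP t\<in>{t. 0 < t \<and> ereal t < conv_radius w}. ereal (wt_psi w t))"
    using conv_radius_w_pos[OF assms] psi_mono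
    by (intro Lim_upto_filter_mono) (auto simp: wt_psi_w_eq_psi ereal_less_if_le)
  finally show ?thesis
    by (simp add: wt_psi_w_eq_psi)
qed

lemma p_mu_rho_eq_SUP:
  assumes "conv_radius h > 0"
  shows "p_mu_rho p = (SUP t\<in>{t. 0 < t \<and> ereal t < conv_radius h}. ereal (mu t))"
proof -
  have "p_mu_rho p = (SUP t\<in>{t. 0 < t \<and> ereal t < conv_radius h}. ereal (p_mu p t))"
    unfolding p_mu_rho_def conv_radius_p using assms mu_mono
    by (intro Lim_upto_filter_mono) (auto simp: p_mu_p_eq_mu ereal_less_if_le)
  thus ?thesis
    by (simp add: p_mu_p_eq_mu)
qed

lemma wt_nu_pos:
  assumes "conv_radius h > 0"
  shows "wt_nu w > 0"
proof -
  obtain t where t: "0 < t" "ereal t < conv_radius w"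
    using ereal_dense2[OF conv_radius_w_pos[OF assms]] by (auto simp: zero_ereal_def)
  hence "0 < psi t"
    using in_radius_w_iff[of t] H'_pos[of t] by (simp add: psi_def)
  also have "ereal (psi t) \<le> wt_nu w"
    unfolding wt_nu_eq_SUP[OF assms] using t by (intro SUP_upper) auto
  finally show ?thesis by (simp add: zero_ereal_def)
qed

lemma p_mu_rho_pos:
  assumes "conv_radius h > 0"
  shows "p_mu_rho p > 0"
proof -
  obtain t where t: "0 < t" "ereal t < conv_radius h"
    using ereal_dense2[OF assms] by (auto simp: zero_ereal_def)
  hence "0 < mu t"
    using mu_strict_mono[of 0 t] mu_0 by simp
  also have "ereal (mu t) \<le> p_mu_rho p"
    unfolding p_mu_rho_eq_SUP[OF assms] using t by (intro SUP_upper) auto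
  finally show ?thesis by (simp add: zero_ereal_def)
qed

lemma level_one_iff:
  "(0 < t \<and> ereal t < conv_radius w \<and> wt_psi w t = 1)
     \<longleftrightarrow> (0 \<le> t \<and> ereal t < conv_radius h \<and> p_mu p t = 1)"
proof
  assume t: "0 < t \<and> ereal t < conv_radius w \<and> wt_psi w t = 1"
  thus "0 \<le> t \<and> ereal t < conv_radius h \<and> p_mu p t = 1"
    using in_radius_w_iff[of t] wt_psi_w_eq_psi[of t] psi_eq_1_iff_mu_eq_1[of t] p_mu_p_eq_mu[of t] by auto
next
  assume t: "0 \<le> t \<and> ereal t < conv_radius h \<and> p_mu p t = 1"
  hence "0 < t"
    using p_mu_p_eq_mu[of t] mu_0 by (cases "t = 0") auto
  moreover have "0 < t * H' t"
    using \<open>0 < t\<close> t H'_pos[of t] by simp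
  ultimately have "H t < 1"
    using t p_mu_p_eq_mu[of t] by (simp add: mu_def)
  thus "0 < t \<and> ereal t < conv_radius w \<and> wt_psi w t = 1"
    using \<open>0 < t\<close> t in_radius_w_iff[of t] wt_psi_w_eq_psi[of t] psi_eq_1_iff_mu_eq_1[of t] p_mu_p_eq_mu[of t]
    by auto
qed

lemma ex_mu_eq_1_if_ge_1:
  assumes "0 \<le> t" "ereal t < conv_radius h" "1 \<le> mu t"
  shows "\<exists>s. 0 \<le> s \<and> ereal s < conv_radius h \<and> mu s = 1"
proof -
  obtain s where "0 \<le> s" "s \<le> t" "mu s = 1"
    using IVT'[of mu 0 1 t] continuous_on_mu[OF assms(2)] assms mu_0 by auto
  thus ?thesis
    using ereal_less_if_le[of s t] assms by auto
qed

lemma one_le_wt_nu_and_p_mu_rho: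
  assumes "0 \<le> t" "ereal t < conv_radius h" "mu t = 1"
  shows "1 \<le> wt_nu w" "1 \<le> p_mu_rho p"
proof -
  have t: "0 < t" "ereal t < conv_radius w" "psi t = 1"
    using level_one_iff[of t] assms p_mu_p_eq_mu[of t] wt_psi_w_eq_psi[of t] by auto
  have R: "conv_radius h > 0"
    using assms by (metis ereal_less_eq(5) le_less_trans)
  show "1 \<le> wt_nu w"
    unfolding wt_nu_eq_SUP[OF R] using t by (intro SUP_upper2[of t]) auto
  show "1 \<le> p_mu_rho p"
    unfolding p_mu_rho_eq_SUP[OF R] using t assms by (intro SUP_upper2[of t]) auto
qed

lemma wt_nu_le_p_mu_rho:
  assumes R: "conv_radius h > 0"
    and mu_lt_1: "\<And>t. 0 \<le> t \<Longrightarrow> ereal t < conv_radius h \<Longrightarrow> mu t < 1"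
  shows "wt_nu w \<le> p_mu_rho p"
  unfolding wt_nu_eq_SUP[OF R] p_mu_rho_eq_SUP[OF R]
proof (rule SUP_least)
  fix t assume "t \<in> {t. 0 < t \<and> ereal t < conv_radius w}"
  hence t: "0 < t" "ereal t < conv_radius h"
    using in_radius_w_iff[of t] by auto
  hence "ereal (psi t) \<le> ereal (mu t)"
    using mu_lt_1[of t] psi_le_mu[of t] by simp
  also have "\<dots> \<le> (SUP t\<in>{t. 0 < t \<and> ereal t < conv_radius h}. ereal (mu t))"
    using t by (intro SUP_upper) auto
  finally show "ereal (psi t) \<le> \<dots>" .
qed

text \<open>If \<open>psi \<le> n < 1\<close>, then beyond any \<open>t\<^sub>0\<close> the gap \<open>1 - H\<close> stays above
  \<open>\<delta> = t\<^sub>0 H'(t\<^sub>0) / n\<close>, which keeps \<open>mu = 1 - (1 - psi) (1 - H)\<close> below \<open>1 - (1 - n) \<delta>\<close>.\<close>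
lemma p_mu_rho_lt_1:
  assumes R: "conv_radius h > 0"
    and mu_lt_1: "\<And>t. 0 \<le> t \<Longrightarrow> ereal t < conv_radius h \<Longrightarrow> mu t < 1"
    and "wt_nu w < 1"
  shows "p_mu_rho p < 1"
proof -
  obtain n where n: "wt_nu w = ereal n" "0 < n" "n < 1"
    using wt_nu_pos[OF R] assms(3) by (cases "wt_nu w") auto
  have t_H'_le: "t * H' t \<le> n * (1 - H t)" if t: "0 < t" "ereal t < conv_radius h" for t
  proof -
    have H_lt_1: "H t < 1"
      using t mu_lt_1[of t] H_le_mu[of t] by simp
    hence "ereal (psi t) \<le> ereal n"
      unfolding n(1)[symmetric] wt_nu_eq_SUP[OF R]
      using t in_radius_w_iff[of t] by (intro SUP_upper) auto
    thus ?thesis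
      using H_lt_1 by (simp add: psi_def pos_divide_le_eq mult.commute)
  qed
  obtain t\<^sub>0 where t\<^sub>0: "0 < t\<^sub>0" "ereal t\<^sub>0 < conv_radius h"
    using ereal_dense2[OF R] by (auto simp: zero_ereal_def)
  define \<delta> where "\<delta> = t\<^sub>0 * H' t\<^sub>0 / n"
  have "\<delta> > 0"
    using t\<^sub>0 H'_pos[of t\<^sub>0] n by (simp add: \<delta>_def)
  have mu_le: "mu t \<le> 1 - (1 - n) * \<delta>" if t: "t\<^sub>0 \<le> t" "ereal t < conv_radius h" for t
  proof -
    have "t\<^sub>0 * H' t\<^sub>0 \<le> n * (1 - H t)"
      using t_H'_mono[of t\<^sub>0 t] t_H'_le[of t] t\<^sub>0 t by simp
    hence "\<delta> \<le> 1 - H t"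
      using n by (simp add: \<delta>_def divide_le_eq mult.commute)
    hence "(1 - n) * \<delta> \<le> (1 - n) * (1 - H t)"
      using n by (intro mult_left_mono) auto
    thus ?thesis
      using t_H'_le[of t] t\<^sub>0 t by (simp add: mu_def algebra_simps)
  qed
  have "p_mu_rho p \<le> ereal (1 - (1 - n) * \<delta>)"
    unfolding p_mu_rho_eq_SUP[OF R]
  proof (rule SUP_least)
    fix t assume "t \<in> {t. 0 < t \<and> ereal t < conv_radius h}"
    hence "mu t \<le> mu (max t t\<^sub>0)" "ereal (max t t\<^sub>0) < conv_radius h"
      using mu_mono[of t "max t t\<^sub>0"] t\<^sub>0 by (auto simp: max_def)
    thus "ereal (mu t) \<le> ereal (1 - (1 - n) * \<delta>)"
      using mu_le[of "max t t\<^sub>0"] by simp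
  qed
  also have "\<dots> < 1"
    using n \<open>\<delta> > 0\<close> by simp
  finally show ?thesis .
qed

lemma one_le_wt_nu_iff:
  assumes R: "conv_radius h > 0"
  shows "1 \<le> wt_nu w \<longleftrightarrow> 1 \<le> p_mu_rho p"
proof (cases "\<exists>t. 0 \<le> t \<and> ereal t < conv_radius h \<and> 1 \<le> mu t")
  case True
  then obtain s where "0 \<le> s" "ereal s < conv_radius h" "mu s = 1"
    using ex_mu_eq_1_if_ge_1 by blast
  thus ?thesis
    using one_le_wt_nu_and_p_mu_rho by blast
next
  case False
  hence "\<And>t. 0 \<le> t \<Longrightarrow> ereal t < conv_radius h \<Longrightarrow> mu t < 1"
    by (auto simp: not_le)
  thus ?thesis
    using wt_nu_le_p_mu_rho[OF R] p_mu_rho_lt_1[OF R] by (meson not_le order_trans)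
qed

lemma types_iff:
  "(wt_typeI w \<longleftrightarrow> p_typeI p) \<and> (wt_typeII w \<longleftrightarrow> p_typeII p) \<and> (wt_typeIII w \<longleftrightarrow> p_typeIII p)"
proof (cases "conv_radius h = 0")
  case True
  hence "conv_radius w = 0"
    using conv_radius_w_le conv_radius_nonneg[of w] by simp
  hence "wt_nu w = 0"
    by (simp add: wt_nu_def)
  thus ?thesis
    using True by (simp add: wt_typeI_def wt_typeII_def wt_typeIII_def
        p_typeI_def p_typeII_def p_typeIII_def conv_radius_p)
next
  case False
  hence R: "conv_radius h > 0"
    using conv_radius_nonneg[of h] by (simp add: order_le_less)
  thus ?thesis
    using one_le_wt_nu_iff[OF R] wt_nu_pos[OF R] p_mu_rho_pos[OF R]
    by (auto simp: wt_typeI_def wt_typeII_def wt_typeIII_def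
        p_typeI_def p_typeII_def p_typeIII_def conv_radius_p not_le[symmetric])
qed

lemma mu_eq_1_unique:
  assumes "0 \<le> s" "ereal s < conv_radius h" "mu s = 1"
    and "0 \<le> t" "ereal t < conv_radius h" "mu t = 1"
  shows "s = t"
  using assms mu_strict_mono[of s t] mu_strict_mono[of t s]
  by (cases s t rule: linorder_cases) auto

lemma conv_radius_w_eq_if_mu_ne_1:
  assumes "\<And>t. 0 \<le> t \<Longrightarrow> ereal t < conv_radius h \<Longrightarrow> mu t \<noteq> 1"
  shows "conv_radius w = conv_radius h"
proof (rule conv_radius_w_eq)
  fix t assume t: "0 \<le> t" "ereal t < conv_radius h"
  have "mu t < 1"
  proof (rule ccontr)
    assume "\<not> mu t < 1"
    then obtain s where "0 \<le> s" "ereal s < conv_radius h" "mu s = 1"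
      using ex_mu_eq_1_if_ge_1[OF t] by auto
    thus False
      using assms by blast
  qed
  thus "H t < 1"
    using H_le_mu[OF t] by simp
qed

lemma wt_tau_eq_p_t0: "wt_tau w = p_t0 p"
proof (cases "\<exists>t. 0 \<le> t \<and> ereal t < conv_radius h \<and> p_mu p t = 1")
  case True
  then obtain t where t: "0 \<le> t" "ereal t < conv_radius h" "mu t = 1"
    using p_mu_p_eq_mu by auto
  have "\<exists>!t. 0 \<le> t \<and> ereal t < conv_radius h \<and> p_mu p t = 1"
    using True mu_eq_1_unique p_mu_p_eq_mu by (intro ex_ex1I) auto
  moreover have "1 \<le> wt_nu w" "p_typeI p"
    using one_le_wt_nu_and_p_mu_rho[OF t] t
    by (auto simp: p_typeI_def conv_radius_p intro: le_less_trans[of 0 "ereal t"])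
  ultimately show ?thesis
    by (simp add: wt_tau_def p_t0_def level_one_iff conv_radius_p)
next
  case False
  hence "conv_radius w = conv_radius h"
    by (intro conv_radius_w_eq_if_mu_ne_1) (use p_mu_p_eq_mu in auto)
  moreover have "\<not> (\<exists>!t. 0 < t \<and> ereal t < conv_radius w \<and> wt_psi w t = 1)"
    using False level_one_iff by (meson ex1_implies_ex)
  moreover have "\<not> (\<exists>!t. 0 \<le> t \<and> ereal t < conv_radius h \<and> p_mu p t = 1)"
    using False by (meson ex1_implies_ex)
  ultimately show ?thesis
    unfolding wt_tau_def p_t0_def conv_radius_p by simp
qed

end

theorem mainTheorem7:
  fixes h :: "nat \<Rightarrow> real"
  assumes "h 0 = 0"
    and "\<And>k. h k \<ge> 0"
    and "\<exists>k. h k \<noteq> 0"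
  defines "w \<equiv> fps_nth (inverse (1 - Abs_fps h))"
    and "p \<equiv> (\<lambda>k. if k = 0 then 0 else h (k - 1))"
  shows "(wt_typeI w \<longleftrightarrow> p_typeI p) \<and> (wt_typeII w \<longleftrightarrow> p_typeII p)
       \<and> (wt_typeIII w \<longleftrightarrow> p_typeIII p) \<and> wt_tau w = p_t0 p"
proof -
  interpret series: nontrivial_nonneg_power_series h
    using assms(1-3) by unfold_locales auto
  show ?thesis
    using series.types_iff series.wt_tau_eq_p_t0
    by (simp add: w_def p_def series.w_def series.p_def)
qed

end
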